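(* Assume $n > d_{\max}$. For all integers $k_1,\dots,k_x$ with $t_i \le k_i \le a_i$ for every $i$ and $k=\sum_{i=1}^x k_i \le n-d_{\max}$, \[ R(k_1,\dots,k_x) \le \prod_{i=1}^{x}\left(1-\left(1-\frac{k}{n-d_i}\right)^{d_i}\right)^{k_i-t_i} \le \prod_{i=1}^x\left(\frac{d_i\, k}{n-d_{\max}}\right)^{k_i-t_i}. \]
   Context: Random graph model: $V$ is a set of $n$ vertices, $B\subseteq V$ a target set with $|B|=t$, and each $v\in V$ has a prescribed out-degree $d_v$ with $1\le d_{\min}\le d_v\le d_{\max}$ (constants). For each $v$ independently, its out-neighbour set is chosen uniformly at random among all $d_v$-element subsets of $V$. Let $d_1,\dots,d_x$ be the distinct values of the $d_v$, $a_i$ the number of vertices of out-degree $d_i$, and $t_i$ the number of vertices of $B$ of out-degree $d_i$. For a set $S\subseteq V$ with $B\subseteq S$ that contains exactly $k_i$ vertices of out-degree $d_i$ for each $i$, $R(k_1,\dots,k_x)$ denotes the probability that every vertex of $S$ has a directed path to a vertex of $B$ all of whose vertices lie in $S$ (by symmetry this depends only on $k_1,\dots,k_x$). *)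

theory Defs
  imports "HOL-Probability.Probability"
begin

text \<open>Random out-neighbourhoods: each vertex v in V independently picks its out-neighbour
  set uniformly among all d v-element subsets of V (outside V the value is the empty set).\<close>
definition out_nbr_pmf :: "'a set \<Rightarrow> ('a \<Rightarrow> nat) \<Rightarrow> ('a \<Rightarrow> 'a set) pmf" where
  "out_nbr_pmf V d = Pi_pmf V {} (\<lambda>v. pmf_of_set {A. A \<subseteq> V \<and> card A = d v})"

definition arcs_within :: "'a set \<Rightarrow> ('a \<Rightarrow> 'a set) \<Rightarrow> ('a \<times> 'a) set" where
  "arcs_within S N = {(u, w). u \<in> S \<and> w \<in> S \<and> w \<in> N u}"

definition all_reach_within :: "'a set \<Rightarrow> 'a set \<Rightarrow> ('a \<Rightarrow> 'a set) \<Rightarrow> bool" where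
  "all_reach_within S B N \<longleftrightarrow> (\<forall>u\<in>S. \<exists>b\<in>B. (u, b) \<in> (arcs_within S N)\<^sup>*)"

text \<open>The probability R for the concrete set S.\<close>
definition R_prob :: "'a set \<Rightarrow> ('a \<Rightarrow> nat) \<Rightarrow> 'a set \<Rightarrow> 'a set \<Rightarrow> real" where
  "R_prob V d B S = measure_pmf.prob (out_nbr_pmf V d) {N. all_reach_within S B N}"

definition deg_count :: "('a \<Rightarrow> nat) \<Rightarrow> 'a set \<Rightarrow> nat \<Rightarrow> nat" where
  "deg_count d X \<delta> = card {v \<in> X. d v = \<delta>}"

end

theory Submission
  imports Defs
begin

text \<open>If every vertex of S reaches B inside S, then every vertex of S - B has an out-neighbour
  in S. These events are independent across vertices, and a uniform \<delta>-subset of an n-set misses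
  a k-set with probability C(n-k,\<delta>)/C(n,\<delta>) \<ge> (1 - k/(n-\<delta>))^\<delta>; grouping the vertices of
  S - B by out-degree gives the first bound. The second is Bernoulli's inequality
  1 - (1-x)^\<delta> \<le> \<delta> x.\<close>

lemma binomial_ratio_lower_bound:
  fixes k d n :: nat
  assumes "d + k \<le> n"
  shows "(1 - real k / (real n - real d)) ^ d * real (n choose d) \<le> real ((n - k) choose d)"
  using assms
proof (induction d arbitrary: n)
  case 0
  then show ?case by simp
next
  case (Suc d)
  then obtain m where n: "n = Suc m" by (cases n) auto
  have le: "d + k \<le> m" using Suc.prems n by simp
  define q where "q = 1 - real k / (real m - real d)"
  have IH: "q ^ d * real (m choose d) \<le> real ((m - k) choose d)"
    using Suc.IH[OF le] by (simp add: q_def)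
  have q_nonneg: "0 \<le> q"
  proof (cases "k = 0")
    case False
    then have "real m - real d \<ge> real k" "real k > 0" using le by auto
    then show ?thesis unfolding q_def by (simp add: field_simps)
  qed (simp add: q_def)
  have q_factor: "q * real (Suc m) \<le> real (Suc (m - k))"
  proof (cases "k = 0")
    case False
    then have pos: "real m - real d > 0" "real k > 0" using le by auto
    have "q * real (Suc m) = real (Suc m) - real k * real (Suc m) / (real m - real d)"
      unfolding q_def by (simp add: field_simps)
    moreover have "real k * real (Suc m) / (real m - real d) \<ge> real k"
      using pos by (simp add: field_simps)
    ultimately show ?thesis using le by simp
  qed (simp add: q_def)
  have "q ^ Suc d * (real (Suc m) * real (m choose d))
          \<le> real (Suc (m - k)) * real ((m - k) choose d)"
    using mult_mono[OF q_factor IH] q_nonneg by (simp add: algebra_simps)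
  moreover have absorb: "real (Suc j choose Suc d) = real (Suc j) * real (j choose d) / real (Suc d)"
    for j using Suc_times_binomial[of d j] by (simp add: field_simps flip: of_nat_mult)
  ultimately have "q ^ Suc d * real (Suc m choose Suc d) \<le> real (Suc (m - k) choose Suc d)"
    by (simp add: divide_right_mono)
  moreover have "Suc m - k = Suc (m - k)" using le by simp
  ultimately show ?case unfolding n q_def by simp
qed

lemma all_reach_within_out_nbr_meets:
  assumes "all_reach_within S B N" "v \<in> S" "v \<notin> B"
  shows "N v \<inter> S \<noteq> {}"
proof -
  obtain b where b: "b \<in> B" "(v, b) \<in> (arcs_within S N)\<^sup>*"
    using assms unfolding all_reach_within_def by auto
  have "v \<noteq> b" using b assms by auto
  then obtain w where "(v, w) \<in> arcs_within S N"
    using b(2) by (metis converse_rtranclE)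
  then show ?thesis unfolding arcs_within_def by auto
qed

lemma R_prob_le_prod_meets:
  assumes "finite V" "S \<subseteq> V"
  shows "R_prob V d B S
    \<le> (\<Prod>v\<in>S - B. measure_pmf.prob (pmf_of_set {A. A \<subseteq> V \<and> card A = d v}) {X. X \<inter> S \<noteq> {}})"
proof -
  define p where "p = (\<lambda>v. pmf_of_set {A. A \<subseteq> V \<and> card A = d v})"
  define E where "E = (\<lambda>v. if v \<in> S - B then {X. X \<inter> S \<noteq> {}} else (UNIV :: 'a set set))"
  have "R_prob V d B S \<le> measure_pmf.prob (Pi_pmf V {} p) (Pi V E)"
    unfolding R_prob_def out_nbr_pmf_def p_def[symmetric]
    by (rule measure_pmf.finite_measure_mono)
       (auto simp: E_def dest: all_reach_within_out_nbr_meets)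
  also have "\<dots> = (\<Prod>v\<in>V. measure_pmf.prob (p v) (E v))"
    by (rule measure_Pi_pmf_Pi[OF assms(1)])
  also have "\<dots> = (\<Prod>v\<in>S - B. measure_pmf.prob (p v) (E v))"
    by (rule prod.mono_neutral_right) (use assms in \<open>auto simp: E_def\<close>)
  finally show ?thesis by (simp add: E_def p_def)
qed

lemma prob_uniform_subset_disjoint:
  assumes "finite V" "S \<subseteq> V" "\<delta> \<le> card V"
  shows "measure_pmf.prob (pmf_of_set {A. A \<subseteq> V \<and> card A = \<delta>}) {X. X \<inter> S = {}}
           = real ((card V - card S) choose \<delta>) / real (card V choose \<delta>)"
proof -
  let ?A = "{A. A \<subseteq> V \<and> card A = \<delta>}"
  have card_A: "card ?A = card V choose \<delta>" using n_subsets[OF assms(1)] by simp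
  then have "?A \<noteq> {}" using assms(3) by (metis card.empty zero_less_binomial_iff less_irrefl)
  moreover have "?A \<inter> {X. X \<inter> S = {}} = {A. A \<subseteq> V - S \<and> card A = \<delta>}" by auto
  moreover have "card (V - S) = card V - card S"
    using assms by (simp add: card_Diff_subset finite_subset)
  ultimately show ?thesis
    using assms(1) card_A n_subsets[of "V - S" \<delta>] by (simp add: measure_pmf_of_set)
qed

lemma prob_uniform_subset_meets_le:
  assumes "finite V" "S \<subseteq> V" "\<delta> + card S \<le> card V"
  shows "measure_pmf.prob (pmf_of_set {A. A \<subseteq> V \<and> card A = \<delta>}) {X. X \<inter> S \<noteq> {}}
           \<le> 1 - (1 - real (card S) / (real (card V) - real \<delta>)) ^ \<delta>"
proof -
  let ?p = "pmf_of_set {A. A \<subseteq> V \<and> card A = \<delta>}"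
  have "{X. X \<inter> S \<noteq> {}} = UNIV - {X. X \<inter> S = {}}" by auto
  then have "measure_pmf.prob ?p {X. X \<inter> S \<noteq> {}} = 1 - measure_pmf.prob ?p {X. X \<inter> S = {}}"
    using measure_pmf.prob_compl by simp
  moreover have "(1 - real (card S) / (real (card V) - real \<delta>)) ^ \<delta>
      \<le> real ((card V - card S) choose \<delta>) / real (card V choose \<delta>)"
    using binomial_ratio_lower_bound[of \<delta> "card S" "card V"] assms(3)
    by (simp add: field_simps)
  ultimately show ?thesis
    using prob_uniform_subset_disjoint[OF assms(1,2)] assms(3) by simp
qed

lemma prod_group_by_degree:
  assumes "finite V" "B \<subseteq> S" "S \<subseteq> V"
  shows "(\<Prod>v\<in>S - B. g (d v)) = (\<Prod>\<delta>\<in>d ` V. g \<delta> ^ (deg_count d S \<delta> - deg_count d B \<delta>))"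
proof -
  have fin_S: "finite S" using assms finite_subset by auto
  have "(\<Prod>v\<in>S - B. g (d v)) = (\<Prod>\<delta>\<in>d ` V. \<Prod>v\<in>{v \<in> S - B. d v = \<delta>}. g (d v))"
    by (rule prod.group[symmetric]) (use fin_S assms in auto)
  also have "\<dots> = (\<Prod>\<delta>\<in>d ` V. g \<delta> ^ card {v \<in> S - B. d v = \<delta>})"
    by (rule prod.cong) auto
  also have "\<dots> = (\<Prod>\<delta>\<in>d ` V. g \<delta> ^ (deg_count d S \<delta> - deg_count d B \<delta>))"
  proof (rule prod.cong[OF refl])
    fix \<delta>
    have "{v \<in> S - B. d v = \<delta>} = {v \<in> S. d v = \<delta>} - {v \<in> B. d v = \<delta>}" by auto
    moreover have "{v \<in> B. d v = \<delta>} \<subseteq> {v \<in> S. d v = \<delta>}" using assms(2) by auto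
    ultimately show "g \<delta> ^ card {v \<in> S - B. d v = \<delta>} = g \<delta> ^ (deg_count d S \<delta> - deg_count d B \<delta>)"
      unfolding deg_count_def using fin_S by (simp add: card_Diff_subset finite_subset)
  qed
  finally show ?thesis .
qed

lemma one_minus_power_le:
  fixes x :: real
  assumes "x \<le> 1"
  shows "1 - (1 - x) ^ n \<le> real n * x"
  using Bernoulli_inequality[of "- x" n] assms by simp

lemma one_minus_power_ratio_bounds:
  assumes "\<delta> \<le> dmax" "dmax < n" "k \<le> n - dmax"
  shows "0 \<le> 1 - (1 - real k / (real n - real \<delta>)) ^ \<delta>"
    and "1 - (1 - real k / (real n - real \<delta>)) ^ \<delta> \<le> real \<delta> * real k / (real n - real dmax)"
proof -
  define x where "x = real k / (real n - real \<delta>)"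
  have pos: "real n - real \<delta> > 0" "real n - real dmax > 0" using assms by auto
  have "0 \<le> x" "x \<le> 1" unfolding x_def using pos assms by (auto simp: field_simps)
  then show "0 \<le> 1 - (1 - real k / (real n - real \<delta>)) ^ \<delta>"
    unfolding x_def[symmetric] by (simp add: power_le_one)
  have "real \<delta> * x \<le> real \<delta> * real k / (real n - real dmax)"
    unfolding x_def using pos assms(1)
    by (simp add: divide_left_mono mult_left_mono flip: times_divide_eq_right)
  then show "1 - (1 - real k / (real n - real \<delta>)) ^ \<delta> \<le> real \<delta> * real k / (real n - real dmax)"
    using one_minus_power_le[of x \<delta>] \<open>x \<le> 1\<close> unfolding x_def by linarith
qed

theorem lemma1:
  fixes V B S :: "'a set" and d :: "'a \<Rightarrow> nat" and n dmax :: nat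
  assumes "finite V" and "card V = n"
    and "B \<subseteq> V"
    and "\<And>v. v \<in> V \<Longrightarrow> 1 \<le> d v"
    and "\<And>v. v \<in> V \<Longrightarrow> d v \<le> dmax"
    and "n > dmax"
    and "B \<subseteq> S" and "S \<subseteq> V"
    and "card S \<le> n - dmax"
  shows "R_prob V d B S
           \<le> (\<Prod>\<delta>\<in>d ` V. (1 - (1 - real (card S) / (real n - real \<delta>)) ^ \<delta>)
                              ^ (deg_count d S \<delta> - deg_count d B \<delta>))
       \<and> (\<Prod>\<delta>\<in>d ` V. (1 - (1 - real (card S) / (real n - real \<delta>)) ^ \<delta>)
                              ^ (deg_count d S \<delta> - deg_count d B \<delta>))
           \<le> (\<Prod>\<delta>\<in>d ` V. (real \<delta> * real (card S) / (real n - real (dmax)))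
                              ^ (deg_count d S \<delta> - deg_count d B \<delta>))"
proof
  define f where "f = (\<lambda>\<delta>::nat. 1 - (1 - real (card S) / (real n - real \<delta>)) ^ \<delta>)"
  have "R_prob V d B S
    \<le> (\<Prod>v\<in>S - B. measure_pmf.prob (pmf_of_set {A. A \<subseteq> V \<and> card A = d v}) {X. X \<inter> S \<noteq> {}})"
    using R_prob_le_prod_meets[OF assms(1,8)] .
  also have "\<dots> \<le> (\<Prod>v\<in>S - B. f (d v))"
  proof (rule prod_mono, rule conjI)
    fix v assume "v \<in> S - B"
    then have "d v \<le> dmax" using assms(5,8) by auto
    then show "measure_pmf.prob (pmf_of_set {A. A \<subseteq> V \<and> card A = d v}) {X. X \<inter> S \<noteq> {}}
        \<le> f (d v)"
      unfolding f_def using prob_uniform_subset_meets_le[OF assms(1,8)] assms(2,6,9) by simp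
  qed simp
  also have "\<dots> = (\<Prod>\<delta>\<in>d ` V. f \<delta> ^ (deg_count d S \<delta> - deg_count d B \<delta>))"
    using prod_group_by_degree[OF assms(1,7,8)] .
  finally show "R_prob V d B S \<le> (\<Prod>\<delta>\<in>d ` V. (1 - (1 - real (card S) / (real n - real \<delta>)) ^ \<delta>)
                              ^ (deg_count d S \<delta> - deg_count d B \<delta>))"
    unfolding f_def .
next
  have "\<delta> \<le> dmax" if "\<delta> \<in> d ` V" for \<delta> using that assms(5) by auto
  then show "(\<Prod>\<delta>\<in>d ` V. (1 - (1 - real (card S) / (real n - real \<delta>)) ^ \<delta>)
                              ^ (deg_count d S \<delta> - deg_count d B \<delta>))
           \<le> (\<Prod>\<delta>\<in>d ` V. (real \<delta> * real (card S) / (real n - real (dmax)))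
                              ^ (deg_count d S \<delta> - deg_count d B \<delta>))"
    using one_minus_power_ratio_bounds[OF _ assms(6,9)] by (intro prod_mono conjI power_mono) auto
qed

end
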